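(* Let $\mu,\gamma,\eta$ be vertices of $\Gamma$ and $\varphi_\eta=\varphi^{[\mu,\gamma]}_\eta$. Then $\varphi_\eta(\nu)\ge0$ for every vertex $\nu$, with $\varphi_\eta(\nu)>0$ if and only if $\nu\in\Gamma^\mu_\gamma$. If $\nu,\nu'\in[\mu,\gamma]$ and $d(\mu,\nu)<d(\mu,\nu')$, then $\varphi_\eta(\nu)<\varphi_\eta(\nu')$. Furthermore, if $\eta\in[\mu,\gamma]$, then $\varphi_\eta$ is constant on any path of $\Gamma$ meeting $[\mu,\gamma]$ in at most one vertex.
   Context: Setting: $R$ two-dimensional regular local ring with algebraically closed residue field; $\pi:X=X_{N+1}\to\cdots\to X_1=\operatorname{Spec}R$ a composition of point blowups; $E_\nu$ strict transforms of exceptional divisors; proximity matrix $P$ ($p_{\mu,\mu}=1$, $p_{\mu,\nu}=-1$ if $x_\mu$ lies on the strict transform on $X_\mu$ of the exceptional divisor of the blowup of $x_\nu$, else $0$), valuation matrix $V=(P^TP)^{-1}$ (symmetric, positive entries). Dual graph $\Gamma$ on vertices $1..N$, $\gamma\sim\eta$ iff $\gamma\ne\eta$ and $E_\gamma\cap E_\eta\neq\emptyset$ (a tree); $[\mu,\gamma]$ the path from $\mu$ to $\gamma$; $d$ the graph distance; branch $\Gamma^\mu_\gamma$ = maximal connected subgraph containing $\gamma$ but not $\mu$ ($\Gamma^\mu_\mu=\emptyset$). $\mathbf 1_i$ standard basis vector of $\mathbb Q^\Gamma$; $\rho_{[\alpha,\beta]}(\nu)=V_{\beta,\nu}/V_{\alpha,\nu}$;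 $\widehat r_{[\mu,\gamma]}=\mathbf 1_\gamma-\rho_{[\mu,\gamma]}(\mu)\mathbf 1_\mu$; $\varphi^{[\mu,\gamma]}_\eta(\nu)=(\widehat r_{[\mu,\gamma]}V)_\nu/V_{\eta,\nu}$. *)

theory Defs
  imports Main "Jordan_Normal_Form.Gauss_Jordan_Elimination"
begin

text \<open>Combinatorial encoding of a composition of N point blowups over a two-dimensional
regular local ring with algebraically closed residue field.  Points x_1..x_N are indexed
0..N-1 (index i corresponds to x_(i+1)).  prox m n means: x_m lies on the strict transform
on X_m of the exceptional divisor of the blowup of x_n.  The realizability conditions below
characterise exactly the proximity relations arising from such sequences of blowups.\<close>

definition proximity_structure :: "nat \<Rightarrow> (nat \<Rightarrow> nat \<Rightarrow> bool) \<Rightarrow> bool" where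
  "proximity_structure N prox \<longleftrightarrow>
     (\<forall>m n. prox m n \<longrightarrow> n < m \<and> m < N) \<and>
     (\<forall>m. 0 < m \<and> m < N \<longrightarrow> 1 \<le> card {n. prox m n} \<and> card {n. prox m n} \<le> 2) \<and>
     (\<forall>m n r. prox m n \<and> prox m r \<and> n < r \<longrightarrow> prox r n) \<and>
     (\<forall>m m' n r. prox m n \<and> prox m r \<and> prox m' n \<and> prox m' r \<and> n < r \<longrightarrow> m = m')"

definition prox_matrix :: "nat \<Rightarrow> (nat \<Rightarrow> nat \<Rightarrow> bool) \<Rightarrow> real mat" where
  "prox_matrix N prox = mat N N (\<lambda>(i, j). if i = j then 1 else if prox i j then -1 else 0)"

definition val_matrix :: "nat \<Rightarrow> (nat \<Rightarrow> nat \<Rightarrow> bool) \<Rightarrow> real mat" where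
  "val_matrix N prox =
     the (mat_inverse (transpose_mat (prox_matrix N prox) * prox_matrix N prox))"

text \<open>Dual graph: strict transforms E_g, E_h (g < h) meet on X_(N+1) iff x_h was on E_g
when blown up and the intersection point was never blown up afterwards.\<close>
definition dual_adj :: "nat \<Rightarrow> (nat \<Rightarrow> nat \<Rightarrow> bool) \<Rightarrow> nat \<Rightarrow> nat \<Rightarrow> bool" where
  "dual_adj N prox g h \<longleftrightarrow> g < N \<and> h < N \<and> g \<noteq> h \<and>
     (let a = min g h; b = max g h in prox b a \<and> \<not> (\<exists>k. prox k a \<and> prox k b))"

definition is_walk :: "nat \<Rightarrow> (nat \<Rightarrow> nat \<Rightarrow> bool) \<Rightarrow> nat list \<Rightarrow> bool" where
  "is_walk N prox xs \<longleftrightarrow> xs \<noteq> [] \<and> (\<forall>v\<in>set xs. v < N) \<and>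
     (\<forall>i. Suc i < length xs \<longrightarrow> dual_adj N prox (xs ! i) (xs ! Suc i))"

definition is_path :: "nat \<Rightarrow> (nat \<Rightarrow> nat \<Rightarrow> bool) \<Rightarrow> nat list \<Rightarrow> bool" where
  "is_path N prox xs \<longleftrightarrow> is_walk N prox xs \<and> distinct xs"

text \<open>Vertex set of the path [a,b] (unique since the dual graph is a tree).\<close>
definition path_between :: "nat \<Rightarrow> (nat \<Rightarrow> nat \<Rightarrow> bool) \<Rightarrow> nat \<Rightarrow> nat \<Rightarrow> nat set" where
  "path_between N prox a b = {v. \<exists>xs. is_path N prox xs \<and> hd xs = a \<and> last xs = b \<and> v \<in> set xs}"

definition gdist :: "nat \<Rightarrow> (nat \<Rightarrow> nat \<Rightarrow> bool) \<Rightarrow> nat \<Rightarrow> nat \<Rightarrow> nat" where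
  "gdist N prox a b = (LEAST n. \<exists>xs. is_walk N prox xs \<and> hd xs = a \<and> last xs = b \<and> length xs = Suc n)"

definition branch :: "nat \<Rightarrow> (nat \<Rightarrow> nat \<Rightarrow> bool) \<Rightarrow> nat \<Rightarrow> nat \<Rightarrow> nat set" where
  "branch N prox m g = {v. \<exists>xs. is_walk N prox xs \<and> hd xs = g \<and> last xs = v \<and> m \<notin> set xs}"

definition rho :: "nat \<Rightarrow> (nat \<Rightarrow> nat \<Rightarrow> bool) \<Rightarrow> nat \<Rightarrow> nat \<Rightarrow> nat \<Rightarrow> real" where
  "rho N prox a b n = val_matrix N prox $$ (b, n) / val_matrix N prox $$ (a, n)"

text \<open>(r V)_n is computed as the dot product of r with column n of V.  The row vector hat r_[m,g] = 1_g - rho_[m,g](m) 1_m.\<close>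
definition rhat :: "nat \<Rightarrow> (nat \<Rightarrow> nat \<Rightarrow> bool) \<Rightarrow> nat \<Rightarrow> nat \<Rightarrow> real vec" where
  "rhat N prox m g = unit_vec N g - rho N prox m g m \<cdot>\<^sub>v unit_vec N m"

definition phi :: "nat \<Rightarrow> (nat \<Rightarrow> nat \<Rightarrow> bool) \<Rightarrow> nat \<Rightarrow> nat \<Rightarrow> nat \<Rightarrow> nat \<Rightarrow> real" where
  "phi N prox m g h n =
     (rhat N prox m g \<bullet> col (val_matrix N prox) n) / val_matrix N prox $$ (h, n)"

end

theory Submission
  imports Defs "Jordan_Normal_Form.Determinant"
begin

text \<open>
  Write \<open>A = P\<^sup>T P\<close>.  Its off-diagonal entries are \<open>-1\<close> on the edges of the dual graph
  \<open>\<Gamma>\<close> and \<open>0\<close> elsewhere, it is positive definite because \<open>P\<close> is unitriangular, and \<open>\<Gamma>\<close>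
  is a tree: contracting the newest vertex shows inductively that every edge is a bridge.
  Now \<open>\<phi>\<^sub>\<eta> = u / w\<close> with \<open>A u = 1\<^sub>\<gamma> - \<rho> 1\<^sub>\<mu>\<close> and \<open>A w = 1\<^sub>\<eta>\<close>.  A minimum principle
  for such matrices gives \<open>w > 0\<close> and \<open>u \<ge> 0\<close>; \<open>u\<close> vanishes off the branch
  \<open>\<Gamma>\<^sup>\<mu>\<^sub>\<gamma>\<close> because its part there has zero energy, and positivity spreads along the edges of
  the branch.  Green's identity on the side \<open>S\<close> of \<open>b\<close> of an edge \<open>{a, b}\<close> gives
  \<open>w\<^sub>a u\<^sub>b - u\<^sub>a w\<^sub>b = [\<gamma> \<in> S] w\<^sub>\<gamma> - [\<mu> \<in> S] \<rho> w\<^sub>\<mu> - [\<eta> \<in> S] u\<^sub>\<eta>\<close>,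
  where \<open>u\<^sub>\<eta> = w\<^sub>\<gamma> - \<rho> w\<^sub>\<mu>\<close>.  This is positive when \<open>S\<close> contains \<open>\<gamma>\<close> but not
  \<open>\<mu>\<close>, so \<open>\<phi>\<^sub>\<eta>\<close> increases along \<open>[\<mu>, \<gamma>]\<close>, and zero when \<open>S\<close> misses \<open>\<mu>, \<gamma>, \<eta>\<close>.
\<close>

lemma rtranclp_map:
  assumes "\<And>x y. R x y \<Longrightarrow> S\<^sup>*\<^sup>* (f x) (f y)" and "R\<^sup>*\<^sup>* a b"
  shows "S\<^sup>*\<^sup>* (f a) (f b)"
  using assms(2) by (induction rule: rtranclp_induct) (auto intro: rtranclp_trans assms(1))

lemma rtranclp_imp_successively:
  assumes "R\<^sup>*\<^sup>* a b"
  shows "\<exists>xs. xs \<noteq> [] \<and> hd xs = a \<and> last xs = b \<and> successively R xs \<and>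
           (\<forall>v\<in>set xs. v = a \<or> (\<exists>u. R u v))"
  using assms
proof (induction rule: rtranclp_induct)
  case base
  show ?case by (intro exI[of _ "[a]"]) auto
next
  case (step y z)
  then obtain xs where "xs \<noteq> []" "hd xs = a" "last xs = y" "successively R xs"
    "\<forall>v\<in>set xs. v = a \<or> (\<exists>u. R u v)" by blast
  with step show ?case
    by (intro exI[of _ "xs @ [z]"]) (auto simp: successively_append_iff)
qed

lemma successively_imp_rtranclp:
  "successively R xs \<Longrightarrow> xs \<noteq> [] \<Longrightarrow> R\<^sup>*\<^sup>* (hd xs) (last xs)"
proof (induction xs)
  case (Cons x xs)
  then show ?case by (cases xs) (auto intro: converse_rtranclp_into_rtranclp)
qed simp

section \<open>Symmetric positive definite matrices with nonpositive off-diagonal entries\<close>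

locale stieltjes_form =
  fixes n :: nat and a :: "nat \<Rightarrow> nat \<Rightarrow> real"
  assumes sym: "a i j = a j i"
    and offdiag_nonpos: "i \<noteq> j \<Longrightarrow> i < n \<Longrightarrow> j < n \<Longrightarrow> a i j \<le> 0"
    and posdef: "(\<exists>k<n. x k \<noteq> 0) \<Longrightarrow> (\<Sum>i<n. \<Sum>j<n. x i * a i j * x j) > 0"
begin

definition amul :: "(nat \<Rightarrow> real) \<Rightarrow> nat \<Rightarrow> real" where
  "amul x i = (\<Sum>j<n. a i j * x j)"

definition aform :: "(nat \<Rightarrow> real) \<Rightarrow> (nat \<Rightarrow> real) \<Rightarrow> real" where
  "aform x y = (\<Sum>i<n. x i * amul y i)"

lemma aform_expand: "aform x y = (\<Sum>i<n. \<Sum>j<n. x i * a i j * y j)"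
  unfolding aform_def amul_def by (simp add: sum_distrib_left mult.assoc)

lemma aform_sym: "aform x y = aform y x"
proof -
  have "aform x y = (\<Sum>j<n. \<Sum>i<n. x i * a i j * y j)"
    unfolding aform_expand by (rule sum.swap)
  also have "\<dots> = aform y x"
    unfolding aform_expand by (intro sum.cong refl) (simp add: sym[of _ "_"] mult_ac)
  finally show ?thesis .
qed

lemma amul_diff: "amul (\<lambda>j. x j - y j) i = amul x i - amul y i"
  unfolding amul_def by (simp add: right_diff_distrib sum_subtractf)

lemma amul_scale: "amul (\<lambda>j. c * x j) i = c * amul x i"
  unfolding amul_def by (simp add: sum_distrib_left mult_ac)

lemma aform_diff_left: "aform (\<lambda>i. x i - y i) z = aform x z - aform y z"
  unfolding aform_def by (simp add: left_diff_distrib sum_subtractf)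

lemma aform_diff_right: "aform z (\<lambda>i. x i - y i) = aform z x - aform z y"
  unfolding aform_def amul_diff by (simp add: right_diff_distrib sum_subtractf)

lemma aform_eq_0_imp: "aform x x = 0 \<Longrightarrow> k < n \<Longrightarrow> x k = 0"
  using posdef[of x] unfolding aform_expand by fastforce

lemma aform_nonneg: "aform x x \<ge> 0"
proof (cases "\<exists>k<n. x k \<noteq> 0")
  case True
  then show ?thesis using posdef[of x] unfolding aform_expand by simp
next
  case False
  then show ?thesis unfolding aform_expand by simp
qed

text \<open>Replacing \<open>x\<close> by \<open>\<bar>x\<bar>\<close> does not increase the energy, and where
  \<open>x\<close> is negative it cannot decrease it either, so \<open>\<bar>x\<bar> - x\<close> has zero energy.\<close>

lemma minimum_principle:
  assumes super: "\<And>i. i < n \<Longrightarrow> x i < 0 \<Longrightarrow> amul x i \<ge> 0" and "i < n"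
  shows "x i \<ge> 0"
proof -
  define y where "y i = \<bar>x i\<bar>" for i
  have energy_abs: "aform y y \<le> aform x x"
    unfolding aform_expand
  proof (intro sum_mono)
    fix i j assume i: "i \<in> {..<n}" and j: "j \<in> {..<n}"
    show "y i * a i j * y j \<le> x i * a i j * x j"
    proof (cases "i = j")
      case True then show ?thesis by (simp add: y_def abs_mult_self_eq)
    next
      case False
      then have "a i j \<le> 0" using offdiag_nonpos i j by auto
      moreover have "x i * x j \<le> y i * y j" unfolding y_def by (metis abs_ge_self abs_mult)
      ultimately have "a i j * (y i * y j) \<le> a i j * (x i * x j)"
        by (simp add: mult_left_mono_neg)
      then show ?thesis by (simp add: mult_ac)
    qed
  qed
  have cross: "aform x x \<le> aform y x"
  proof -
    have "(\<Sum>i<n. (x i - y i) * amul x i) \<le> 0"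
    proof (rule sum_nonpos)
      fix i assume i: "i \<in> {..<n}"
      show "(x i - y i) * amul x i \<le> 0"
      proof (cases "x i < 0")
        case True then show ?thesis using super i by (simp add: y_def mult_nonpos_nonneg)
      next
        case False then show ?thesis by (simp add: y_def)
      qed
    qed
    then show ?thesis unfolding aform_def by (simp add: left_diff_distrib sum_subtractf)
  qed
  have "aform (\<lambda>i. y i - x i) (\<lambda>i. y i - x i) = aform y y - 2 * aform y x + aform x x"
    unfolding aform_diff_left aform_diff_right using aform_sym[of x y] by simp
  also have "\<dots> \<le> 0" using energy_abs cross by linarith
  finally have "aform (\<lambda>i. y i - x i) (\<lambda>i. y i - x i) = 0"
    using aform_nonneg by (meson order.antisym)
  from aform_eq_0_imp[OF this \<open>i < n\<close>] show "x i \<ge> 0" unfolding y_def by simp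
qed

lemma amul_at_zero:
  assumes nonneg: "\<And>i. i < n \<Longrightarrow> x i \<ge> 0" and q: "q < n" and xq: "x q = 0"
  shows "amul x q = (\<Sum>j\<in>{..<n} - {q}. a q j * x j)"
    and "j < n \<Longrightarrow> a q j * x j \<le> 0"
proof -
  show "amul x q = (\<Sum>j\<in>{..<n} - {q}. a q j * x j)"
    unfolding amul_def using q xq by (simp add: sum.remove)
  show "a q j * x j \<le> 0" if "j < n"
    using offdiag_nonpos[of q j] nonneg[OF that] q xq that
    by (cases "j = q") (auto simp: mult_nonpos_nonneg)
qed

lemma pos_if_amul_pos:
  assumes nonneg: "\<And>i. i < n \<Longrightarrow> x i \<ge> 0" and q: "q < n" and "amul x q > 0"
  shows "x q > 0"
proof (rule ccontr)
  assume "\<not> x q > 0"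
  then have xq: "x q = 0" using nonneg[OF q] by simp
  have "amul x q = (\<Sum>j\<in>{..<n} - {q}. a q j * x j)"
    using amul_at_zero(1)[of x q] nonneg q xq by blast
  also have "\<dots> \<le> 0"
    using amul_at_zero(2)[of x q] nonneg q xq by (intro sum_nonpos) auto
  finally show False using \<open>amul x q > 0\<close> by simp
qed

lemma pos_if_neighbour_pos:
  assumes nonneg: "\<And>i. i < n \<Longrightarrow> x i \<ge> 0" and q: "q < n" and p: "p < n" "p \<noteq> q"
    and "a q p < 0" and "x p > 0" and "amul x q \<ge> 0"
  shows "x q > 0"
proof (rule ccontr)
  assume "\<not> x q > 0"
  then have xq: "x q = 0" using nonneg[OF q] by simp
  have "amul x q = (\<Sum>j\<in>{..<n} - {q}. a q j * x j)"
    using amul_at_zero(1)[of x q] nonneg q xq by blast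
  also have "\<dots> = a q p * x p + (\<Sum>j\<in>{..<n} - {q} - {p}. a q j * x j)"
    using p by (simp add: sum.remove)
  also have "\<dots> < 0"
  proof -
    have "(\<Sum>j\<in>{..<n} - {q} - {p}. a q j * x j) \<le> 0"
      using amul_at_zero(2)[of x q] nonneg q xq by (intro sum_nonpos) auto
    moreover have "a q p * x p < 0" using \<open>a q p < 0\<close> \<open>x p > 0\<close> by (rule mult_neg_pos)
    ultimately show ?thesis by simp
  qed
  finally show False using \<open>amul x q \<ge> 0\<close> by simp
qed

text \<open>The terms with both indices in \<open>S\<close> cancel by symmetry of \<open>a\<close>.\<close>

lemma green_identity:
  assumes S: "S \<subseteq> {..<n}"
  shows "(\<Sum>i\<in>S. w i * amul u i - u i * amul w i)
       = (\<Sum>i\<in>S. \<Sum>j\<in>{..<n} - S. a i j * (w i * u j - u i * w j))"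
proof -
  have split: "(\<Sum>j<n. f j) = (\<Sum>j\<in>S. f j) + (\<Sum>j\<in>{..<n} - S. f j)" for f :: "nat \<Rightarrow> real"
    using S by (metis finite_lessThan sum.subset_diff add.commute)
  have interior: "(\<Sum>i\<in>S. \<Sum>j\<in>S. a i j * (w i * u j - u i * w j)) = 0"
  proof -
    have "(\<Sum>i\<in>S. \<Sum>j\<in>S. a i j * (u i * w j)) = (\<Sum>j\<in>S. \<Sum>i\<in>S. a i j * (u i * w j))"
      by (rule sum.swap)
    also have "\<dots> = (\<Sum>i\<in>S. \<Sum>j\<in>S. a i j * (w i * u j))"
      by (intro sum.cong refl) (simp add: sym mult_ac)
    finally show ?thesis by (simp add: right_diff_distrib sum_subtractf)
  qed
  have "(\<Sum>i\<in>S. w i * amul u i - u i * amul w i) = (\<Sum>i\<in>S. \<Sum>j<n. a i j * (w i * u j - u i * w j))"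
    unfolding amul_def by (simp add: sum_distrib_left right_diff_distrib sum_subtractf mult_ac)
  also have "\<dots> = (\<Sum>i\<in>S. \<Sum>j\<in>S. a i j * (w i * u j - u i * w j))
                 + (\<Sum>i\<in>S. \<Sum>j\<in>{..<n} - S. a i j * (w i * u j - u i * w j))"
    unfolding split sum.distrib ..
  finally show ?thesis unfolding interior by simp
qed

end

section \<open>The matrix \<open>P\<^sup>T P\<close> of a proximity structure\<close>

locale proximity =
  fixes N :: nat and prox :: "nat \<Rightarrow> nat \<Rightarrow> bool"
  assumes prox_structure: "proximity_structure N prox"
begin

lemma prox_less: "prox k n \<Longrightarrow> n < k \<and> k < N"
  using prox_structure unfolding proximity_structure_def by blast

lemma prox_proximate: "prox k n \<Longrightarrow> prox k r \<Longrightarrow> n < r \<Longrightarrow> prox r n"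
  using prox_structure unfolding proximity_structure_def by blast

lemma prox_pair_unique: "prox k n \<Longrightarrow> prox k r \<Longrightarrow> prox k' n \<Longrightarrow> prox k' r \<Longrightarrow> n < r \<Longrightarrow> k = k'"
  using prox_structure unfolding proximity_structure_def by blast

lemma prox_exists: "0 < k \<Longrightarrow> k < N \<Longrightarrow> \<exists>n. prox k n"
  using prox_structure unfolding proximity_structure_def
  by (metis Collect_empty_eq card.empty not_one_le_zero)

definition pmat :: "nat \<Rightarrow> nat \<Rightarrow> real" where
  "pmat k i = (if k = i then 1 else if prox k i then -1 else 0)"

definition gram :: "nat \<Rightarrow> nat \<Rightarrow> real" where
  "gram i j = (\<Sum>k<N. pmat k i * pmat k j)"

abbreviation adj :: "nat \<Rightarrow> nat \<Rightarrow> bool" where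
  "adj \<equiv> dual_adj N prox"

lemma adj_sym: "adj i j = adj j i"
  unfolding dual_adj_def Let_def by (auto simp: min.commute max.commute)

lemma adj_less: "adj i j \<Longrightarrow> i < N \<and> j < N \<and> i \<noteq> j"
  unfolding dual_adj_def by auto

lemma gram_entry:
  "i < N \<Longrightarrow> j < N \<Longrightarrow> (transpose_mat (prox_matrix N prox) * prox_matrix N prox) $$ (i, j) = gram i j"
  unfolding prox_matrix_def gram_def pmat_def by (simp add: scalar_prod_def atLeast0LessThan)

lemma gram_sym: "gram i j = gram j i"
  unfolding gram_def by (simp add: mult.commute)

text \<open>For \<open>i < j\<close> the only contributions to \<open>gram i j\<close> are \<open>-1\<close> from row \<open>j\<close> if \<open>x\<^sub>j\<close>
  is proximate to \<open>x\<^sub>i\<close>, and \<open>+1\<close> from the (unique) point proximate to both.\<close>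

lemma gram_off_less:
  assumes ij: "i < j" and jN: "j < N"
  shows "gram i j = (if adj i j then -1 else 0)"
proof -
  have terms: "pmat k i * pmat k j = (if k = j then (if prox j i then -1 else 0) else 0)
       + (if prox k i \<and> prox k j then 1 else 0)" for k
    using ij prox_less[of k i] prox_less[of k j] prox_less[of i j] unfolding pmat_def by auto
  have row_j: "(\<Sum>k<N. (if k = j then (if prox j i then -1 else 0) else 0::real)) = (if prox j i then -1 else 0)"
    using jN by (simp add: sum.delta)
  have adj_iff: "adj i j \<longleftrightarrow> prox j i \<and> \<not> (\<exists>k. prox k i \<and> prox k j)"
    using ij jN unfolding dual_adj_def Let_def by (auto simp: min_def max_def)
  have gram_eq: "gram i j = (if prox j i then -1 else 0) + (\<Sum>k<N. (if prox k i \<and> prox k j then 1 else 0::real))"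
    unfolding gram_def terms sum.distrib row_j ..
  show ?thesis
  proof (cases "\<exists>k. prox k i \<and> prox k j")
    case True
    then obtain k0 where k0: "prox k0 i" "prox k0 j" by blast
    have "prox k i \<and> prox k j \<longleftrightarrow> k = k0" for k
      using prox_pair_unique[of k i j k0] k0 ij by blast
    moreover have "k0 < N" using prox_less[OF k0(1)] by simp
    ultimately show ?thesis
      using gram_eq adj_iff True prox_proximate[OF k0 ij] by (simp add: sum.delta)
  next
    case False
    then have "(\<Sum>k<N. (if prox k i \<and> prox k j then 1 else 0::real)) = 0"
      by (intro sum.neutral) auto
    then show ?thesis using gram_eq adj_iff False by simp
  qed
qed

lemma gram_off:
  assumes "i \<noteq> j" "i < N" "j < N"
  shows "gram i j = (if adj i j then -1 else 0)"
proof (cases "i < j")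
  case True then show ?thesis using gram_off_less assms by auto
next
  case False then show ?thesis
    using gram_off_less[of j i] assms gram_sym[of i j] adj_sym[of i j] by auto
qed

lemma gram_quadratic:
  "(\<Sum>i<N. \<Sum>j<N. x i * gram i j * x j) = (\<Sum>k<N. (\<Sum>i<N. pmat k i * x i)\<^sup>2)"
proof -
  have "(\<Sum>i<N. \<Sum>j<N. x i * gram i j * x j) = (\<Sum>i<N. \<Sum>j<N. \<Sum>k<N. (pmat k i * x i) * (pmat k j * x j))"
    unfolding gram_def by (simp add: sum_distrib_left sum_distrib_right mult_ac)
  also have "\<dots> = (\<Sum>i<N. \<Sum>k<N. \<Sum>j<N. (pmat k i * x i) * (pmat k j * x j))"
    by (intro sum.cong refl sum.swap)
  also have "\<dots> = (\<Sum>k<N. \<Sum>i<N. \<Sum>j<N. (pmat k i * x i) * (pmat k j * x j))"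
    by (rule sum.swap)
  also have "\<dots> = (\<Sum>k<N. (\<Sum>i<N. pmat k i * x i)\<^sup>2)"
    by (simp add: power2_eq_square sum_product)
  finally show ?thesis .
qed

lemma pmat_kernel:
  assumes rows: "\<And>k. k < N \<Longrightarrow> (\<Sum>i<N. pmat k i * x i) = 0"
  shows "k < N \<Longrightarrow> x k = 0"
proof (induction k rule: less_induct)
  case (less k)
  have "(\<Sum>i\<in>{..<N} - {k}. pmat k i * x i) = 0"
  proof (rule sum.neutral, intro ballI)
    fix i assume i: "i \<in> {..<N} - {k}"
    show "pmat k i * x i = 0"
      using less.IH[of i] prox_less[of k i] i by (auto simp: pmat_def)
  qed
  then have "(\<Sum>i<N. pmat k i * x i) = x k"
    using less.prems by (simp add: sum.remove pmat_def)
  then show "x k = 0" using rows less.prems by simp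
qed

sublocale stieltjes_form N gram
proof
  show "gram i j = gram j i" for i j by (rule gram_sym)
  show "i \<noteq> j \<Longrightarrow> i < N \<Longrightarrow> j < N \<Longrightarrow> gram i j \<le> 0" for i j
    using gram_off by simp
  show "(\<Sum>i<N. \<Sum>j<N. x i * gram i j * x j) > 0" if "\<exists>k<N. x k \<noteq> 0" for x
  proof -
    have "\<exists>k<N. (\<Sum>i<N. pmat k i * x i) \<noteq> 0"
      using pmat_kernel[of x] that by blast
    then obtain k where "k < N" "(\<Sum>i<N. pmat k i * x i) \<noteq> 0" by blast
    then show ?thesis
      unfolding gram_quadratic by (intro sum_pos2[of _ k]) auto
  qed
qed

end

section \<open>The dual graph is a tree\<close>

context proximity
begin

text \<open>The dual graph after the first \<open>M\<close> blowups, on the vertices \<open>{..<M}\<close>.\<close>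

definition adj_upto :: "nat \<Rightarrow> nat \<Rightarrow> nat \<Rightarrow> bool" where
  "adj_upto M a b \<longleftrightarrow> a < M \<and> b < M \<and> a \<noteq> b \<and> prox (max a b) (min a b) \<and>
     \<not> (\<exists>k<M. prox k (min a b) \<and> prox k (max a b))"

definition adj_without :: "nat \<Rightarrow> nat \<Rightarrow> nat \<Rightarrow> nat \<Rightarrow> nat \<Rightarrow> bool" where
  "adj_without M a b x y \<longleftrightarrow> adj_upto M x y \<and> {x, y} \<noteq> {a, b}"

definition edges_are_bridges :: "nat \<Rightarrow> bool" where
  "edges_are_bridges M \<longleftrightarrow> (\<forall>a b. adj_upto M a b \<longrightarrow> \<not> (adj_without M a b)\<^sup>*\<^sup>* a b)"

lemma adj_eq_adj_upto: "adj = adj_upto N"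
proof (intro ext)
  fix a b
  have "(\<exists>k. prox k (min a b) \<and> prox k (max a b)) \<longleftrightarrow> (\<exists>k<N. prox k (min a b) \<and> prox k (max a b))"
    using prox_less by blast
  then show "adj a b = adj_upto N a b" unfolding adj_upto_def dual_adj_def Let_def by simp
qed

lemma adj_upto_sym: "adj_upto M a b = adj_upto M b a"
  unfolding adj_upto_def by (simp only: min.commute[of a b] max.commute[of a b]) blast

lemma adj_without_sym: "adj_without M a b x y = adj_without M a b y x"
  unfolding adj_without_def using adj_upto_sym by (auto simp: insert_commute)

lemma adj_without_commute: "adj_without M a b = adj_without M b a"
  unfolding adj_without_def by (auto simp: insert_commute)

lemma adj_upto_less: "adj_upto M a b \<Longrightarrow> a < M \<and> b < M \<and> a \<noteq> b"
  unfolding adj_upto_def by blast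

lemma adj_upto_ordered:
  assumes "a < b"
  shows "adj_upto M a b \<longleftrightarrow> b < M \<and> prox b a \<and> \<not> (\<exists>k<M. prox k a \<and> prox k b)"
  using assms unfolding adj_upto_def by (auto simp: min_def max_def)

lemma adj_upto_mono: "adj_upto (Suc M) a b \<Longrightarrow> a < M \<Longrightarrow> b < M \<Longrightarrow> adj_upto M a b"
  unfolding adj_upto_def by auto

lemma adj_upto_new: "adj_upto (Suc M) M y \<longleftrightarrow> prox M y"
proof
  assume "adj_upto (Suc M) M y"
  then show "prox M y"
    using adj_upto_less adj_upto_ordered[of y M "Suc M"] adj_upto_sym by (metis less_SucE)
next
  assume p: "prox M y"
  then have "y < M" using prox_less by blast
  moreover have "\<not> (prox k y \<and> prox k M)" if "k < Suc M" for k
    using prox_less[of k M] that by auto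
  ultimately show "adj_upto (Suc M) M y"
    using adj_upto_ordered[of y M "Suc M"] adj_upto_sym p by blast
qed

lemma adj_upto_old:
  assumes e: "adj_upto M a b" and n: "\<not> adj_upto (Suc M) a b"
  shows "prox M a \<and> prox M b"
proof -
  have ordered: "prox M x \<and> prox M y" if xy: "x < y" "adj_upto M x y" "\<not> adj_upto (Suc M) x y" for x y
  proof -
    obtain k where "k < Suc M" "\<not> k < M" "prox k x" "prox k y"
      using adj_upto_ordered[of x y M] adj_upto_ordered[of x y "Suc M"] xy by auto
    then show ?thesis by (metis less_SucE)
  qed
  show ?thesis
    using ordered[of a b] ordered[of b a] e n adj_upto_less[OF e] adj_upto_sym
    by (metis linorder_neqE_nat)
qed

lemma adj_upto_pair:
  assumes c: "prox M c" and y: "prox M y" and cy: "c \<noteq> y"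
  shows "adj_upto M c y \<and> \<not> adj_upto (Suc M) c y"
proof -
  have ordered: "adj_upto M c y \<and> \<not> adj_upto (Suc M) c y"
    if c: "prox M c" and y: "prox M y" and cy: "c < y" for c y
  proof -
    have "\<not> (prox k c \<and> prox k y)" if "k < M" for k
      using prox_pair_unique[of k c y M] c y cy that by blast
    then show ?thesis
      using adj_upto_ordered[of c y M] adj_upto_ordered[of c y "Suc M"] prox_less[OF y]
        prox_proximate[OF c y cy] c y cy by blast
  qed
  show ?thesis
    using ordered[OF c y] ordered[OF y c] adj_upto_sym cy by (metis linorder_neqE_nat)
qed

definition contract :: "nat \<Rightarrow> nat \<Rightarrow> nat \<Rightarrow> nat" where
  "contract M c v = (if v = M then c else v)"

text \<open>Contracting the newest vertex \<open>M\<close> onto a point \<open>c\<close> to which it is proximate maps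
  the graph at stage \<open>M + 1\<close> onto the graph at stage \<open>M\<close>: the neighbours of \<open>M\<close> are the
  points to which \<open>M\<close> is proximate, and these are adjacent to each other at stage \<open>M\<close>.
  Only if \<open>M\<close> is proximate to some point must \<open>c\<close> be one of them.\<close>

lemma adj_upto_contract:
  assumes c: "\<And>v. prox M v \<Longrightarrow> prox M c" and xy: "adj_upto (Suc M) x y"
  shows "contract M c x = contract M c y \<or> adj_upto M (contract M c x) (contract M c y)"
proof -
  have less: "x < Suc M" "y < Suc M" "x \<noteq> y" using adj_upto_less[OF xy] by auto
  have at_M: "adj_upto M c v" if "adj_upto (Suc M) M v" "v \<noteq> c" for v
  proof -
    have "prox M v" using that(1) adj_upto_new by simp
    then show ?thesis using adj_upto_pair[OF c _ \<open>v \<noteq> c\<close>[symmetric]] by blast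
  qed
  consider "x \<noteq> M" "y \<noteq> M" | "x = M" | "y = M" by blast
  then show ?thesis
  proof cases
    case 1
    then show ?thesis using adj_upto_mono[OF xy] less by (simp add: contract_def)
  next
    case 2
    then show ?thesis using at_M[of y] xy less by (auto simp: contract_def)
  next
    case 3
    then show ?thesis using at_M[of x] xy less adj_upto_sym by (auto simp: contract_def)
  qed
qed

lemma walk_contract:
  assumes c: "\<And>v. prox M v \<Longrightarrow> prox M c" and walk: "(adj_without (Suc M) a b)\<^sup>*\<^sup>* x y"
    and keeps_edge: "\<And>x y. adj_upto (Suc M) x y \<Longrightarrow> {x, y} \<noteq> {a, b} \<Longrightarrow>
       adj_upto M (contract M c x) (contract M c y) \<Longrightarrow> {contract M c x, contract M c y} \<noteq> {a', b'}"
  shows "(adj_without M a' b')\<^sup>*\<^sup>* (contract M c x) (contract M c y)"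
proof (rule rtranclp_map[OF _ walk])
  fix x y assume "adj_without (Suc M) a b x y"
  then have xy: "adj_upto (Suc M) x y" "{x, y} \<noteq> {a, b}" unfolding adj_without_def by auto
  have "contract M c x = contract M c y \<or> adj_upto M (contract M c x) (contract M c y)"
    by (rule adj_upto_contract[of M c x y]) (use c xy(1) in auto)
  then show "(adj_without M a' b')\<^sup>*\<^sup>* (contract M c x) (contract M c y)"
  proof (elim disjE)
    assume "adj_upto M (contract M c x) (contract M c y)"
    with keeps_edge[OF xy] show ?thesis by (simp add: adj_without_def r_into_rtranclp)
  qed simp
qed

lemma bridge_at_new_vertex:
  assumes IH: "edges_are_bridges M" and Mb: "adj_upto (Suc M) M b"
    and walk: "(adj_without (Suc M) M b)\<^sup>*\<^sup>* M b"
  shows False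
proof -
  have pb: "prox M b" using Mb adj_upto_new by simp
  have bM: "b \<noteq> M" using adj_upto_less[OF Mb] by simp
  show False
  proof (cases "\<exists>c. prox M c \<and> c \<noteq> b")
    case True
    then obtain c where c: "prox M c" "c \<noteq> b" by blast
    have cb: "adj_upto M c b" and ncb: "\<not> adj_upto (Suc M) c b"
      using adj_upto_pair[OF c(1) pb c(2)] by simp_all
    have "(adj_without M c b)\<^sup>*\<^sup>* (contract M c M) (contract M c b)"
    proof (rule walk_contract[OF _ walk])
      show "prox M c" if "prox M v" for v using c(1) .
    next
      fix x y assume "adj_upto (Suc M) x y" "{x, y} \<noteq> {M, b}"
      then show "{contract M c x, contract M c y} \<noteq> {c, b}"
        using ncb c(2) adj_upto_sym unfolding contract_def by (auto simp: doubleton_eq_iff)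
    qed
    then show False using IH cb bM unfolding edges_are_bridges_def contract_def by simp
  next
    case False
    from walk show False
    proof (cases rule: converse_rtranclpE)
      case (step y)
      then show False using False adj_upto_new unfolding adj_without_def by auto
    qed (use bM in simp)
  qed
qed

lemma bridge_at_old_vertices:
  assumes IH: "edges_are_bridges M" and ab: "adj_upto (Suc M) a b" and "a \<noteq> M" "b \<noteq> M"
    and walk: "(adj_without (Suc M) a b)\<^sup>*\<^sup>* a b"
  shows False
proof -
  have "a < M" "b < M" using adj_upto_less[OF ab] \<open>a \<noteq> M\<close> \<open>b \<noteq> M\<close> by auto
  then have abM: "adj_upto M a b" using adj_upto_mono ab by blast
  have not_both: "\<not> (prox M a \<and> prox M b)"
    using adj_upto_pair[of M a b] ab adj_upto_less[OF ab] by auto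
  define c where "c = (SOME p. prox M p)"
  have c: "prox M c" if "prox M v" for v
    unfolding c_def using that by (rule someI)
  have "(adj_without M a b)\<^sup>*\<^sup>* (contract M c a) (contract M c b)"
  proof (rule walk_contract[of M c, OF _ walk])
    show "prox M c" if "prox M v" for v using c that .
  next
    fix x y assume xy: "adj_upto (Suc M) x y" "{x, y} \<noteq> {a, b}"
    show "{contract M c x, contract M c y} \<noteq> {a, b}"
    proof (cases "x = M \<or> y = M")
      case True
      have "prox M y" if "x = M" using xy(1) that adj_upto_new by simp
      moreover have "prox M x" if "y = M"
        using xy(1) that adj_upto_new[of M x] adj_upto_sym[of "Suc M" x y] by simp
      ultimately show ?thesis
        using True not_both c adj_upto_less[OF xy(1)] unfolding contract_def
        by (auto simp: doubleton_eq_iff)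
    qed (use xy(2) in \<open>simp add: contract_def\<close>)
  qed
  then show False using IH abM \<open>a \<noteq> M\<close> \<open>b \<noteq> M\<close> unfolding edges_are_bridges_def contract_def by simp
qed

lemma edges_are_bridges: "edges_are_bridges M"
proof (induction M)
  case 0 then show ?case unfolding edges_are_bridges_def adj_upto_def by simp
next
  case (Suc M)
  show ?case unfolding edges_are_bridges_def
  proof (intro allI impI notI)
    fix a b
    assume ab: "adj_upto (Suc M) a b" and walk: "(adj_without (Suc M) a b)\<^sup>*\<^sup>* a b"
    have "(adj_without (Suc M) b a)\<^sup>*\<^sup>* b a"
      using sympD[OF symp_rtranclp walk] adj_without_sym adj_without_commute by (metis sympI)
    then show False
      using bridge_at_new_vertex[OF Suc.IH] bridge_at_old_vertices[OF Suc.IH] ab walk adj_upto_sym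
      by metis
  qed
qed

lemma connected_upto: "M \<le> N \<Longrightarrow> v < M \<Longrightarrow> (adj_upto M)\<^sup>*\<^sup>* v 0"
proof (induction M arbitrary: v)
  case 0 then show ?case by simp
next
  case (Suc M)
  have lift: "(adj_upto (Suc M))\<^sup>*\<^sup>* x 0" if "x < M" for x
  proof -
    have "(adj_upto M)\<^sup>*\<^sup>* x 0" using Suc that by simp
    then show ?thesis
    proof (rule rtranclp_map[of "adj_upto M" "adj_upto (Suc M)" id, simplified, rotated])
      fix x y assume e: "adj_upto M x y"
      show "(adj_upto (Suc M))\<^sup>*\<^sup>* x y"
      proof (cases "adj_upto (Suc M) x y")
        case False
        then have "adj_upto (Suc M) x M" "adj_upto (Suc M) M y"
          using adj_upto_old[OF e] adj_upto_new adj_upto_sym by metis+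
        then show ?thesis by auto
      qed simp
    qed
  qed
  show ?case
  proof (cases "v < M \<or> M = 0")
    case True then show ?thesis using lift Suc.prems by auto
  next
    case False
    then obtain p where p: "prox M p" using prox_exists[of M] Suc.prems by auto
    then have "(adj_upto (Suc M))\<^sup>*\<^sup>* p 0" using lift prox_less by blast
    moreover have "adj_upto (Suc M) M p" using adj_upto_new p by simp
    moreover have "v = M" using False Suc.prems by simp
    ultimately show ?thesis by (auto intro: converse_rtranclp_into_rtranclp)
  qed
qed

lemma adj_symp: "symp adj"
  using adj_sym by (auto intro: sympI)

lemma connected: "a < N \<Longrightarrow> b < N \<Longrightarrow> adj\<^sup>*\<^sup>* a b"
  using connected_upto[of N a] connected_upto[of N b] sympD[OF symp_rtranclp[OF adj_symp]]
  unfolding adj_eq_adj_upto[symmetric] by (meson le_refl rtranclp_trans)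

end

section \<open>Branches and paths in the dual graph\<close>

context proximity
begin

definition adj_avoiding :: "nat \<Rightarrow> nat \<Rightarrow> nat \<Rightarrow> bool" where
  "adj_avoiding z x y \<longleftrightarrow> adj x y \<and> x \<noteq> z \<and> y \<noteq> z"

definition br :: "nat \<Rightarrow> nat \<Rightarrow> nat set" where
  "br m g = {v. g < N \<and> g \<noteq> m \<and> (adj_avoiding m)\<^sup>*\<^sup>* g v}"

lemma adj_avoiding_symp: "symp (adj_avoiding z)"
  unfolding adj_avoiding_def using adj_sym by (auto intro: sympI)

lemma is_walk_iff: "is_walk N prox xs \<longleftrightarrow> xs \<noteq> [] \<and> (\<forall>v\<in>set xs. v < N) \<and> successively adj xs"
  unfolding is_walk_def successively_conv_nth by simp

lemma walk_avoiding_reach: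
  assumes w: "is_walk N prox xs" and z: "z \<notin> set xs"
  shows "(adj_avoiding z)\<^sup>*\<^sup>* (hd xs) (last xs)"
proof -
  have "successively (adj_avoiding z) xs"
    using w by (auto simp: is_walk_iff intro!: successively_mono[of adj xs])
      (use z in \<open>auto simp: adj_avoiding_def\<close>)
  then show ?thesis using successively_imp_rtranclp w by (auto simp: is_walk_iff)
qed

lemma br_less_ne: "v \<in> br m g \<Longrightarrow> v < N \<and> v \<noteq> m"
  unfolding br_def
  by (auto elim: rtranclp.cases simp: adj_avoiding_def dest!: adj_less)

lemma br_subset: "br m g \<subseteq> {..<N}"
  using br_less_ne by blast

lemma start_in_br: "g < N \<Longrightarrow> g \<noteq> m \<Longrightarrow> g \<in> br m g"
  unfolding br_def by simp

lemma br_step: "x \<in> br m g \<Longrightarrow> adj x y \<Longrightarrow> y \<noteq> m \<Longrightarrow> y \<in> br m g"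
  using br_less_ne[of x m g] unfolding br_def adj_avoiding_def
  by (auto intro: rtranclp.rtrancl_into_rtrancl)

lemma branch_eq_br: "branch N prox m g = br m g"
proof
  show "branch N prox m g \<subseteq> br m g"
  proof
    fix v assume "v \<in> branch N prox m g"
    then obtain xs where xs: "is_walk N prox xs" "hd xs = g" "last xs = v" "m \<notin> set xs"
      unfolding branch_def by blast
    then have "g \<in> set xs" using hd_in_set is_walk_iff by blast
    then have "g < N" "g \<noteq> m" using xs is_walk_iff by auto
    then show "v \<in> br m g" using walk_avoiding_reach[OF xs(1) xs(4)] xs unfolding br_def by simp
  qed
next
  show "br m g \<subseteq> branch N prox m g"
  proof
    fix v assume "v \<in> br m g"
    then have g: "g < N" "g \<noteq> m" and r: "(adj_avoiding m)\<^sup>*\<^sup>* g v" unfolding br_def by auto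
    obtain xs where xs: "xs \<noteq> []" "hd xs = g" "last xs = v" "successively (adj_avoiding m) xs"
      "\<forall>v\<in>set xs. v = g \<or> (\<exists>u. adj_avoiding m u v)" using rtranclp_imp_successively[OF r] by blast
    have "\<forall>w\<in>set xs. w < N \<and> w \<noteq> m"
      using xs(5) g unfolding adj_avoiding_def by (auto dest!: adj_less)
    moreover have "successively adj xs"
      using xs(4) by (rule successively_mono) (auto simp: adj_avoiding_def)
    ultimately show "v \<in> branch N prox m g"
      unfolding branch_def is_walk_iff using xs by blast
  qed
qed

lemma br_edge_disjoint:
  assumes ab: "adj a b"
  shows "br a b \<inter> br b a = {}"
proof (rule ccontr)
  assume "br a b \<inter> br b a \<noteq> {}"
  then obtain v where v1: "(adj_avoiding a)\<^sup>*\<^sup>* b v" and v2: "(adj_avoiding b)\<^sup>*\<^sup>* a v"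
    unfolding br_def by blast
  let ?D = "adj_without N a b"
  have "adj_avoiding z x y \<Longrightarrow> z \<in> {a, b} \<Longrightarrow> ?D x y" for z x y
    unfolding adj_avoiding_def adj_without_def adj_eq_adj_upto by (auto simp: doubleton_eq_iff)
  then have bv: "?D\<^sup>*\<^sup>* b v" and av: "?D\<^sup>*\<^sup>* a v"
    using rtranclp_mono[of "adj_avoiding a" ?D] rtranclp_mono[of "adj_avoiding b" ?D] v1 v2
    by (auto simp: le_fun_def)
  have "symp ?D" using adj_without_sym by (auto intro: sympI)
  then have "?D\<^sup>*\<^sup>* v b" using bv by (rule sympD[OF symp_rtranclp])
  with av have "?D\<^sup>*\<^sup>* a b" by (rule rtranclp_trans)
  then show False
    using edges_are_bridges[of N] ab unfolding edges_are_bridges_def adj_eq_adj_upto by blast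
qed

lemma br_back_neighbour:
  assumes ab: "adj a b" and x: "x \<in> br a b" and xa: "adj x a"
  shows "x = b"
proof (rule ccontr)
  assume "x \<noteq> b"
  then have "adj_avoiding b a x" using xa adj_sym adj_less[OF ab] unfolding adj_avoiding_def by blast
  then have "x \<in> br b a" using adj_less[OF ab] unfolding br_def by auto
  then show False using br_edge_disjoint[OF ab] x by blast
qed

lemma br_edge_cover:
  assumes ab: "adj a b" and v: "v < N"
  shows "v \<in> br a b \<or> v \<in> br b a"
proof -
  have a: "a < N" "b < N" "a \<noteq> b" using adj_less[OF ab] by auto
  have "adj\<^sup>*\<^sup>* a v" using connected a v by blast
  then show ?thesis
  proof (induction rule: rtranclp_induct)
    case base then show ?case using start_in_br a by auto
  next
    case (step y z)
    then show ?case using br_step[of y _ _ z] start_in_br a by metis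
  qed
qed

lemma br_closed_off_edge:
  assumes ab: "adj a b" and x: "x \<in> br a b" and xy: "adj x y" and ne: "{x, y} \<noteq> {a, b}"
  shows "y \<in> br a b"
  using br_back_neighbour[OF ab x] br_step[OF x xy] xy ne by (metis insert_commute)

lemma br_neighbours_unique:
  assumes ma: "adj m a" and mb: "adj m b" and va: "v \<in> br m a" and vb: "v \<in> br m b"
  shows "a = b"
proof (rule ccontr)
  assume ab: "a \<noteq> b"
  have av: "(adj_avoiding m)\<^sup>*\<^sup>* a v" and bv: "(adj_avoiding m)\<^sup>*\<^sup>* b v"
    using va vb unfolding br_def by auto
  from bv have "(adj_avoiding m)\<^sup>*\<^sup>* v b" by (rule sympD[OF symp_rtranclp[OF adj_avoiding_symp]])
  with av have "(adj_avoiding m)\<^sup>*\<^sup>* a b" by (rule rtranclp_trans)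
  then have "b \<in> br m a" using adj_less[OF ma] unfolding br_def by auto
  moreover have "adj_avoiding a m b" using mb ab adj_less[OF ma] unfolding adj_avoiding_def by auto
  then have "b \<in> br a m" using adj_less[OF ma] unfolding br_def by auto
  ultimately show False using br_edge_disjoint[OF ma] by blast
qed

lemma path_unique:
  "is_path N prox xs \<Longrightarrow> is_path N prox ys \<Longrightarrow> hd xs = hd ys \<Longrightarrow> last xs = last ys \<Longrightarrow> xs = ys"
proof (induction xs arbitrary: ys)
  case Nil then show ?case by (simp add: is_path_def is_walk_def)
next
  case (Cons x xs)
  obtain ys' where ys: "ys = x # ys'"
    using Cons.prems(2,3) by (cases ys) (auto simp: is_path_def is_walk_def)
  have dx: "x \<notin> set xs" "distinct xs" and dy: "x \<notin> set ys'" "distinct ys'"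
    using Cons.prems(1,2) ys by (auto simp: is_path_def)
  have wx: "successively adj (x # xs)" "\<forall>v\<in>set xs. v < N"
    and wy: "successively adj (x # ys')" "\<forall>v\<in>set ys'. v < N"
    using Cons.prems(1,2) ys by (auto simp: is_path_def is_walk_iff)
  show ?case
  proof (cases "xs = [] \<or> ys' = []")
    case True
    then have "xs = [] \<and> ys' = []"
      using Cons.prems(4) ys dx(1) dy(1) last_in_set by (metis last.simps)
    then show ?thesis using ys by simp
  next
    case False
    have a1: "adj x (hd xs)" and a2: "adj x (hd ys')"
      using wx wy False by (auto simp: successively_Cons)
    have walks: "is_walk N prox xs" "is_walk N prox ys'"
      using wx wy False by (auto simp: is_walk_iff successively_Cons)
    have lx: "last xs = last ys'" using Cons.prems(4) ys False by simp
    have "last xs \<in> br x (hd xs)" "last xs \<in> br x (hd ys')"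
      using walk_avoiding_reach[OF walks(1) dx(1)] walk_avoiding_reach[OF walks(2) dy(1)]
        adj_less[OF a1] adj_less[OF a2] lx unfolding br_def by auto
    then have "hd xs = hd ys'" using br_neighbours_unique[OF a1 a2] by blast
    then have "xs = ys'" using Cons.IH walks dx(2) dy(2) lx by (simp add: is_path_def)
    then show ?thesis using ys by simp
  qed
qed

lemma walk_shortens_to_path:
  "is_walk N prox ws \<Longrightarrow>
     \<exists>ps. is_path N prox ps \<and> hd ps = hd ws \<and> last ps = last ws \<and> length ps \<le> length ws"
proof (induction "length ws" arbitrary: ws rule: less_induct)
  case less
  show ?case
  proof (cases "distinct ws")
    case True then show ?thesis using less.prems by (auto simp: is_path_def)
  next
    case False
    then obtain xs y ys zs where ws: "ws = xs @ [y] @ ys @ [y] @ zs"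
      using not_distinct_decomp by blast
    let ?w = "xs @ [y] @ zs"
    have s: "successively adj ws" "\<forall>v\<in>set ws. v < N" using less.prems is_walk_iff by auto
    have "successively adj (xs @ [y])" "successively adj (y # zs)"
      using s(1) successively_append_iff[of adj "xs @ [y]" "ys @ y # zs"]
        successively_append_iff[of adj "xs @ y # ys" "y # zs"] ws by simp_all
    then have "successively adj ?w"
      by (auto simp: successively_append_iff successively_Cons)
    then have w: "is_walk N prox ?w" using s(2) ws is_walk_iff by auto
    have "hd ?w = hd ws" "last ?w = last ws" using ws by (cases xs; cases zs; simp)+
    then show ?thesis using less.hyps[OF _ w] ws by fastforce
  qed
qed

lemma path_take:
  assumes "is_path N prox xs" and "0 < i"
  shows "is_path N prox (take i xs)"
proof -
  have "successively adj (take i xs @ drop i xs)" using assms by (simp add: is_path_def is_walk_iff)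
  then have "successively adj (take i xs)" by (simp only: successively_append_iff)
  then show ?thesis using assms
    by (auto simp: is_path_def is_walk_iff dest: in_set_takeD)
qed

lemma path_drop:
  assumes "is_path N prox xs" and "i < length xs"
  shows "is_path N prox (drop i xs)"
proof -
  have "successively adj (take i xs @ drop i xs)" using assms by (simp add: is_path_def is_walk_iff)
  then have "successively adj (drop i xs)" by (simp only: successively_append_iff)
  then show ?thesis using assms
    by (auto simp: is_path_def is_walk_iff dest: in_set_dropD)
qed

lemma path_edge: "is_path N prox xs \<Longrightarrow> Suc k < length xs \<Longrightarrow> adj (xs ! k) (xs ! Suc k)"
  using successively_nth[of adj xs k] by (simp add: is_path_def is_walk_iff)

lemma gdist_path:
  assumes p: "is_path N prox xs" and i: "i < length xs"
  shows "gdist N prox (hd xs) (xs ! i) = i"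
  unfolding gdist_def
proof (rule Least_equality)
  let ?t = "take (Suc i) xs"
  have t: "is_path N prox ?t" "hd ?t = hd xs" "last ?t = xs ! i" "length ?t = Suc i"
    using path_take[OF p, of "Suc i"] i by (simp_all add: hd_take) (simp add: take_Suc_conv_app_nth)
  then show "\<exists>ys. is_walk N prox ys \<and> hd ys = hd xs \<and> last ys = xs ! i \<and> length ys = Suc i"
    by (auto simp: is_path_def)
  fix k assume "\<exists>ys. is_walk N prox ys \<and> hd ys = hd xs \<and> last ys = xs ! i \<and> length ys = Suc k"
  then obtain ys where ys: "is_walk N prox ys" "hd ys = hd xs" "last ys = xs ! i" "length ys = Suc k"
    by blast
  obtain ps where ps: "is_path N prox ps" "hd ps = hd ys" "last ps = last ys" "length ps \<le> length ys"
    using walk_shortens_to_path[OF ys(1)] by blast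
  have "ps = ?t" using path_unique[OF ps(1) t(1)] ps ys t by simp
  then show "i \<le> k" using ps(4) ys(4) t(4) by simp
qed

lemma path_between_eq_set:
  assumes p: "is_path N prox xs"
  shows "path_between N prox (hd xs) (last xs) = set xs"
proof
  show "path_between N prox (hd xs) (last xs) \<subseteq> set xs"
    unfolding path_between_def using path_unique[OF p] by fastforce
  show "set xs \<subseteq> path_between N prox (hd xs) (last xs)"
    unfolding path_between_def using p by blast
qed

lemma path_stays_in_br:
  assumes ab: "adj a b" and p: "is_path N prox xs" and no_edge: "\<not> (a \<in> set xs \<and> b \<in> set xs)"
    and start: "hd xs \<in> br a b"
  shows "set xs \<subseteq> br a b"
proof -
  have "i < length xs \<Longrightarrow> xs ! i \<in> br a b" for i
  proof (induction i)
    case 0 then show ?case using start by (simp add: hd_conv_nth)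
  next
    case (Suc i)
    have "{xs ! i, xs ! Suc i} \<noteq> {a, b}" using no_edge Suc.prems by (auto simp: doubleton_eq_iff)
    then show ?case
      using br_closed_off_edge[OF ab _ path_edge[OF p Suc.prems]] Suc by simp
  qed
  then show ?thesis by (auto simp: in_set_conv_nth)
qed

end

section \<open>Positivity of the valuation matrix\<close>

context proximity
begin

abbreviation gram_mat :: "real mat" where
  "gram_mat \<equiv> transpose_mat (prox_matrix N prox) * prox_matrix N prox"

definition val :: "nat \<Rightarrow> nat \<Rightarrow> real" where
  "val i j = val_matrix N prox $$ (i, j)"

lemma gram_mat_carrier: "gram_mat \<in> carrier_mat N N"
proof -
  have "prox_matrix N prox \<in> carrier_mat N N" unfolding prox_matrix_def by simp
  then show ?thesis by simp
qed

lemma gram_mat_mult_vec: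
  assumes v: "v \<in> carrier_vec N" and i: "i < N"
  shows "(gram_mat *\<^sub>v v) $ i = amul (\<lambda>j. v $ j) i"
  using v i gram_mat_carrier gram_entry
  by (auto simp: amul_def scalar_prod_def atLeast0LessThan intro!: sum.cong)

lemma det_gram_mat: "det gram_mat \<noteq> 0"
proof -
  have "v = 0\<^sub>v N" if v: "v \<in> carrier_vec N" and "gram_mat *\<^sub>v v = 0\<^sub>v N" for v
  proof -
    have "aform (\<lambda>j. v $ j) (\<lambda>j. v $ j) = 0"
      unfolding aform_def using gram_mat_mult_vec[OF v] that(2) by (simp add: sum.neutral)
    then show ?thesis using v aform_eq_0_imp by (intro eq_vecI) auto
  qed
  then show ?thesis using det_0_iff_vec_prod_zero_field[OF gram_mat_carrier] by blast
qed

lemma val_matrix_inverse: "val_matrix N prox * gram_mat = 1\<^sub>m N \<and> val_matrix N prox \<in> carrier_mat N N"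
proof -
  have "gram_mat \<in> Units (ring_mat TYPE(real) N ())"
    by (rule det_non_zero_imp_unit[OF gram_mat_carrier det_gram_mat])
  then obtain B where B: "mat_inverse gram_mat = Some B"
    using mat_inverse(1)[OF gram_mat_carrier] by fastforce
  then have "val_matrix N prox = B" unfolding val_matrix_def by simp
  with mat_inverse(2)[OF gram_mat_carrier B] show ?thesis by simp
qed

lemma amul_val:
  assumes r: "r < N" and k: "k < N"
  shows "amul (val r) k = (if k = r then 1 else 0)"
proof -
  have V: "val_matrix N prox \<in> carrier_mat N N" using val_matrix_inverse by simp
  have "amul (val r) k = (val_matrix N prox * gram_mat) $$ (r, k)"
    using r k V gram_mat_carrier gram_entry
    by (auto simp: amul_def val_def scalar_prod_def atLeast0LessThan gram_sym mult.commute
        intro!: sum.cong)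
  then show ?thesis using val_matrix_inverse r k by simp
qed

lemma pos_propagates:
  assumes nonneg: "\<And>i. i < N \<Longrightarrow> x i \<ge> 0"
    and edges: "\<And>a b. R a b \<Longrightarrow> adj a b \<and> amul x b \<ge> 0"
    and "R\<^sup>*\<^sup>* p v" and "x p > 0"
  shows "x v > 0"
  using \<open>R\<^sup>*\<^sup>* p v\<close>
proof (induction rule: rtranclp_induct)
  case (step y z)
  have yz: "adj y z" "amul x z \<ge> 0" using edges[OF step.hyps(2)] by auto
  then have "gram z y = -1" using gram_off[of z y] adj_less[of y z] adj_sym by auto
  then show ?case
    using pos_if_neighbour_pos[of x z y] nonneg adj_less[OF yz(1)] yz step.IH by simp
qed (use \<open>x p > 0\<close> in simp)

lemma val_pos:
  assumes r: "r < N" and n: "n < N"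
  shows "val r n > 0"
proof -
  have nonneg: "val r i \<ge> 0" if "i < N" for i
    using amul_val[OF r] minimum_principle[of "val r"] that by simp
  have "val r r > 0"
    using pos_if_amul_pos[of "val r" r] nonneg amul_val[OF r r] r by simp
  moreover have "adj b n' \<Longrightarrow> adj b n' \<and> amul (val r) n' \<ge> 0" for b n'
    using amul_val[OF r] adj_less[of b n'] by simp
  ultimately show ?thesis
    using pos_propagates[of "val r" adj r n] nonneg connected[OF r n] by blast
qed

end

section \<open>The functions \<open>\<phi>\<close>\<close>

text \<open>The vertices \<open>m, g, h\<close> are \<open>\<mu>, \<gamma>, \<eta>\<close>; \<open>u = r V\<close> with \<open>r = 1\<^sub>\<gamma> - \<rho> 1\<^sub>\<mu>\<close>, and
  \<open>w\<close> is the row \<open>\<eta>\<close> of \<open>V\<close>, so that \<open>\<phi>\<^sub>\<eta> = u / w\<close>.\<close>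

locale phi_setting = proximity +
  fixes m g h :: nat
  assumes m: "m < N" and g: "g < N" and h: "h < N"
begin

definition rho_m :: real where
  "rho_m = val g m / val m m"

definition u :: "nat \<Rightarrow> real" where
  "u n = val g n - rho_m * val m n"

definition w :: "nat \<Rightarrow> real" where
  "w = val h"

lemma phi_eq:
  assumes n: "n < N"
  shows "phi N prox m g h n = u n / w n"
proof -
  have V: "val_matrix N prox \<in> carrier_mat N N" using val_matrix_inverse by simp
  have rho: "rho N prox m g m = rho_m" unfolding rho_def rho_m_def val_def ..
  have "rhat N prox m g \<bullet> col (val_matrix N prox) n
      = (\<Sum>i<N. (if i = g then val i n else 0) - (if i = m then rho_m * val i n else 0))"
    unfolding scalar_prod_def
    by (rule sum.cong) (use V n m g in \<open>auto simp: rhat_def rho val_def algebra_simps\<close>)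
  also have "\<dots> = u n" using m g by (simp add: sum_subtractf u_def)
  finally show ?thesis unfolding phi_def w_def val_def by simp
qed

lemma amul_u: "k < N \<Longrightarrow> amul u k = (if k = g then 1 else 0) - rho_m * (if k = m then 1 else 0)"
  using amul_diff[of "val g" "\<lambda>j. rho_m * val m j" k] amul_scale[of rho_m "val m" k]
    amul_val[OF g] amul_val[OF m] unfolding u_def by simp

lemma amul_w: "k < N \<Longrightarrow> amul w k = (if k = h then 1 else 0)"
  unfolding w_def using amul_val[OF h] by simp

lemma w_pos: "n < N \<Longrightarrow> w n > 0"
  unfolding w_def using val_pos[OF h] by simp

lemma rho_m_pos: "rho_m > 0"
  unfolding rho_m_def using val_pos[OF g m] val_pos[OF m m] by simp

lemma u_m: "u m = 0"
  unfolding u_def rho_m_def using val_pos[OF m m] by simp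

lemma flux_eq:
  assumes S: "S \<subseteq> {..<N}"
  shows "(\<Sum>i\<in>S. w i * amul u i - u i * amul w i)
     = (if g \<in> S then w g else 0) - (if m \<in> S then rho_m * w m else 0) - (if h \<in> S then u h else 0)"
proof -
  have "(\<Sum>i\<in>S. w i * amul u i - u i * amul w i)
      = (\<Sum>i\<in>S. (if i = g then w i else 0) - (if i = m then rho_m * w i else 0) - (if i = h then u i else 0))"
  proof (rule sum.cong[OF refl])
    fix i assume "i \<in> S"
    then have "i < N" using S by auto
    then show "w i * amul u i - u i * amul w i
      = (if i = g then w i else 0) - (if i = m then rho_m * w i else 0) - (if i = h then u i else 0)"
      unfolding amul_u[OF \<open>i < N\<close>] amul_w[OF \<open>i < N\<close>] by (simp add: algebra_simps)
  qed
  also have "\<dots> = (if g \<in> S then w g else 0) - (if m \<in> S then rho_m * w m else 0) - (if h \<in> S then u h else 0)"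
    using finite_subset[OF S] by (simp add: sum_subtractf sum.delta)
  finally show ?thesis .
qed

lemma u_h: "u h = w g - rho_m * w m"
  using flux_eq[of "{..<N}"] green_identity[of "{..<N}" w u] g m h by simp

text \<open>Only the edge \<open>{a, b}\<close> leaves the branch \<open>br a b\<close>, so Green's identity on it reduces to
  a single term.\<close>

lemma flux_through_edge:
  assumes ab: "adj a b"
  shows "(\<Sum>i\<in>br a b. w i * amul u i - u i * amul w i) = w a * u b - u a * w b"
proof -
  let ?S = "br a b" and ?C = "{..<N} - br a b"
  let ?t = "\<lambda>i j. gram i j * (w i * u j - u i * w j)"
  note S = br_subset[of a b]
  have abN: "a < N" "b < N" "a \<noteq> b" using adj_less[OF ab] by auto
  have bS: "b \<in> ?S" using start_in_br abN by simp
  have aC: "a \<in> ?C" using br_less_ne abN by auto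
  have only_edge: "?t i j = (if i = b \<and> j = a then ?t b a else 0)" if i: "i \<in> ?S" and j: "j \<in> ?C" for i j
  proof -
    have "\<not> adj i j" if "\<not> (i = b \<and> j = a)"
      using br_step[OF i] br_back_neighbour[OF ab i] j that by blast
    moreover have "i \<noteq> j" "i < N" "j < N" using i j br_less_ne by auto
    ultimately show ?thesis using gram_off by auto
  qed
  have "(\<Sum>i\<in>?S. w i * amul u i - u i * amul w i) = (\<Sum>i\<in>?S. \<Sum>j\<in>?C. ?t i j)"
    by (rule green_identity[OF S])
  also have "\<dots> = (\<Sum>i\<in>?S. \<Sum>j\<in>?C. if i = b \<and> j = a then ?t b a else 0)"
    by (intro sum.cong refl only_edge)
  also have "\<dots> = (\<Sum>i\<in>?S. if i = b then ?t b a else 0)"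
    using aC by (intro sum.cong refl) (auto simp: sum.delta)
  also have "\<dots> = ?t b a"
    using finite_subset[OF S] bS by simp
  also have "gram b a = -1" using gram_off[of b a] abN ab adj_sym by auto
  finally show ?thesis by (simp add: algebra_simps)
qed

lemma phi_less_across_edge:
  assumes ab: "adj a b" and "g \<in> br a b" and "m \<notin> br a b"
  shows "phi N prox m g h a < phi N prox m g h b"
proof -
  have abN: "a < N" "b < N" using adj_less[OF ab] by auto
  have "w a * u b - u a * w b = w g - (if h \<in> br a b then u h else 0)"
    using flux_through_edge[OF ab] flux_eq[OF br_subset] assms by simp
  also have "\<dots> > 0"
    using u_h w_pos[OF g] w_pos[OF m] rho_m_pos by simp
  finally have "w a * u b - u a * w b > 0" .
  then show ?thesis using w_pos[OF abN(1)] w_pos[OF abN(2)] phi_eq abN by (simp add: field_simps)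
qed

lemma phi_eq_across_edge:
  assumes ab: "adj a b" and "g \<notin> br a b" and "m \<notin> br a b" and "h \<notin> br a b"
  shows "phi N prox m g h a = phi N prox m g h b"
proof -
  have abN: "a < N" "b < N" using adj_less[OF ab] by auto
  have "w a * u b - u a * w b = 0"
    using flux_through_edge[OF ab] flux_eq[OF br_subset] assms by simp
  then show ?thesis using w_pos[OF abN(1)] w_pos[OF abN(2)] phi_eq abN by (simp add: field_simps)
qed

lemma u_nonneg: "n < N \<Longrightarrow> u n \<ge> 0"
  by (rule minimum_principle) (use amul_u u_m in force)

text \<open>Off the branch, \<open>u\<close> has zero energy: the part \<open>z\<close> of \<open>u\<close> outside \<open>br m g\<close> satisfies
  \<open>z\<^sub>i (A z)\<^sub>i = 0\<close> for every \<open>i\<close>, since no vertex outside \<open>br m g \<union> {m}\<close> has a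
  neighbour in \<open>br m g\<close>.\<close>

lemma u_zero_off_branch:
  assumes n: "n < N" and nS: "n \<notin> br m g"
  shows "u n = 0"
proof -
  let ?S = "br m g"
  define y where "y i = (if i \<in> ?S then u i else 0)" for i
  define z where "z i = (if i \<in> ?S then 0 else u i)" for i
  have "z i * amul z i = 0" if i: "i < N" for i
  proof (cases "i \<in> ?S \<or> i = m")
    case True then show ?thesis using u_m by (auto simp: z_def)
  next
    case False
    then have iS: "i \<notin> ?S" and im: "i \<noteq> m" and ig: "i \<noteq> g" using start_in_br g by auto
    have "amul y i = 0" unfolding amul_def
    proof (rule sum.neutral, intro ballI)
      fix j assume "j \<in> {..<N}"
      show "gram i j * y j = 0"
      proof (cases "j \<in> ?S")
        case True
        then have "\<not> adj i j" "i \<noteq> j" using br_step[of j m g i] adj_sym[of i j] iS im by auto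
        then show ?thesis using gram_off[of i j] i \<open>j \<in> {..<N}\<close> by simp
      qed (simp add: y_def)
    qed
    moreover have "z = (\<lambda>j. u j - y j)" unfolding z_def y_def by auto
    ultimately show ?thesis using amul_diff[of u y i] amul_u[OF i] ig im by simp
  qed
  then have "aform z z = 0" unfolding aform_def by (intro sum.neutral) auto
  then show ?thesis using aform_eq_0_imp[of z n] n nS by (simp add: z_def)
qed

lemma u_pos_on_branch:
  assumes v: "v \<in> br m g"
  shows "u v > 0"
proof -
  have gm: "g \<noteq> m" and r: "(adj_avoiding m)\<^sup>*\<^sup>* g v" using v unfolding br_def by auto
  have "u g > 0" using pos_if_amul_pos[of u g] u_nonneg amul_u[OF g] gm g by simp
  moreover have "adj a b \<and> amul u b \<ge> 0" if "adj_avoiding m a b" for a b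
    using that amul_u adj_less[of a b] unfolding adj_avoiding_def by auto
  ultimately show ?thesis using pos_propagates[of u "adj_avoiding m" g v] u_nonneg r by blast
qed

lemma phi_sign:
  assumes n: "n < N"
  shows "phi N prox m g h n \<ge> 0 \<and> (phi N prox m g h n > 0 \<longleftrightarrow> n \<in> branch N prox m g)"
  using u_pos_on_branch[of n] u_zero_off_branch[OF n] w_pos[OF n] phi_eq[OF n]
  unfolding branch_eq_br by (cases "n \<in> br m g") auto

lemma phi_less_along_path:
  assumes p: "is_path N prox xs" and "hd xs = m" and "last xs = g" and k: "Suc k < length xs"
  shows "phi N prox m g h (xs ! k) < phi N prox m g h (xs ! Suc k)"
proof -
  let ?a = "xs ! k" and ?b = "xs ! Suc k"
  have ab: "adj ?a ?b" by (rule path_edge[OF p k])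
  have abN: "?a < N" "?b < N" "?a \<noteq> ?b" using adj_less[OF ab] by auto
  have disj: "set (take (Suc k) xs) \<inter> set (drop (Suc k) xs) = {}"
    using p set_take_disj_set_drop_if_distinct[of xs "Suc k" "Suc k"] by (simp add: is_path_def)
  have a_take: "?a \<in> set (take (Suc k) xs)" using k by (simp add: take_Suc_conv_app_nth)
  have b_drop: "?b \<in> set (drop (Suc k) xs)" using k by (metis Cons_nth_drop_Suc list.set_intros(1))
  have "(adj_avoiding ?a)\<^sup>*\<^sup>* (hd (drop (Suc k) xs)) (last (drop (Suc k) xs))"
    using walk_avoiding_reach path_drop[OF p k] disj a_take by (auto simp: is_path_def)
  then have "g \<in> br ?a ?b"
    using k abN \<open>last xs = g\<close> unfolding br_def by (simp add: hd_drop_conv_nth)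
  have "(adj_avoiding ?b)\<^sup>*\<^sup>* (hd (take (Suc k) xs)) (last (take (Suc k) xs))"
    using walk_avoiding_reach[of "take (Suc k) xs" ?b] path_take[OF p, of "Suc k"] disj b_drop
    by (auto simp: is_path_def)
  moreover have "hd (take (Suc k) xs) = m" using \<open>hd xs = m\<close> by (simp add: hd_take)
  moreover have "last (take (Suc k) xs) = ?a" using k by (simp add: take_Suc_conv_app_nth)
  ultimately have "(adj_avoiding ?b)\<^sup>*\<^sup>* m ?a" by simp
  then have "m \<in> br ?b ?a"
    using abN sympD[OF symp_rtranclp[OF adj_avoiding_symp]] unfolding br_def by blast
  then have "m \<notin> br ?a ?b" using br_edge_disjoint[OF ab] by blast
  with ab \<open>g \<in> br ?a ?b\<close> show ?thesis by (rule phi_less_across_edge)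
qed

lemma phi_strict_mono_on_path_between:
  assumes n: "n \<in> path_between N prox m g" and n': "n' \<in> path_between N prox m g"
    and less: "gdist N prox m n < gdist N prox m n'"
  shows "phi N prox m g h n < phi N prox m g h n'"
proof -
  obtain xs where p: "is_path N prox xs" and "hd xs = m" "last xs = g"
    using n unfolding path_between_def by blast
  then have "path_between N prox m g = set xs" using path_between_eq_set[OF p] by simp
  then obtain i j where ij: "i < length xs" "xs ! i = n" "j < length xs" "xs ! j = n'"
    using n n' by (auto simp: in_set_conv_nth)
  have "i < j" using less gdist_path[OF p] ij \<open>hd xs = m\<close> by metis
  have "j' < length xs \<Longrightarrow> i < j' \<Longrightarrow> phi N prox m g h (xs ! i) < phi N prox m g h (xs ! j')" for j'
  proof (induction j')
    case (Suc j')
    then show ?case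
      using phi_less_along_path[OF p \<open>hd xs = m\<close> \<open>last xs = g\<close>, of j'] by (cases "i = j'") auto
  qed simp
  then show ?thesis using \<open>i < j\<close> ij by blast
qed

text \<open>An edge not contained in \<open>[\<mu>, \<gamma>]\<close> has the whole path \<open>[\<mu>, \<gamma>]\<close>, hence \<open>\<mu>\<close>,
  \<open>\<gamma>\<close> and \<open>\<eta>\<close>, on one side, so the flux through it vanishes.\<close>

lemma phi_eq_across_edge_off_path:
  assumes ab: "adj a b" and ys: "is_path N prox ys" "hd ys = m" "last ys = g" "h \<in> set ys"
    and no_edge: "\<not> (a \<in> set ys \<and> b \<in> set ys)"
  shows "phi N prox m g h a = phi N prox m g h b"
proof -
  have ba: "adj b a" using ab adj_sym by blast
  have mgh: "m \<in> set ys" "g \<in> set ys" "h \<in> set ys"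
    using ys by (auto simp: is_path_def is_walk_def)
  from br_edge_cover[OF ab m] show ?thesis
  proof
    assume "m \<in> br a b"
    then have "set ys \<subseteq> br a b" using path_stays_in_br[OF ab ys(1) no_edge] ys(2) by simp
    then have "g \<notin> br b a" "m \<notin> br b a" "h \<notin> br b a"
      using br_edge_disjoint[OF ab] mgh by blast+
    then show ?thesis using phi_eq_across_edge[OF ba] by simp
  next
    assume "m \<in> br b a"
    then have "set ys \<subseteq> br b a" using path_stays_in_br[OF ba ys(1)] no_edge ys(2) by auto
    then have "g \<notin> br a b" "m \<notin> br a b" "h \<notin> br a b"
      using br_edge_disjoint[OF ab] mgh by blast+
    then show ?thesis using phi_eq_across_edge[OF ab] by simp
  qed
qed

lemma phi_constant_on_paths_off:
  assumes hP: "h \<in> path_between N prox m g" and p: "is_path N prox xs"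
    and meet: "card (set xs \<inter> path_between N prox m g) \<le> 1"
    and n: "n \<in> set xs" and n': "n' \<in> set xs"
  shows "phi N prox m g h n = phi N prox m g h n'"
proof -
  obtain ys where ys: "is_path N prox ys" "hd ys = m" "last ys = g"
    using hP unfolding path_between_def by blast
  then have PB: "path_between N prox m g = set ys" using path_between_eq_set by blast
  have edge: "phi N prox m g h (xs ! k) = phi N prox m g h (xs ! Suc k)" if k: "Suc k < length xs" for k
  proof (rule phi_eq_across_edge_off_path[OF path_edge[OF p k] ys])
    show "h \<in> set ys" using hP PB by simp
    show "\<not> (xs ! k \<in> set ys \<and> xs ! Suc k \<in> set ys)"
    proof
      assume "xs ! k \<in> set ys \<and> xs ! Suc k \<in> set ys"
      then have "{xs ! k, xs ! Suc k} \<subseteq> set xs \<inter> set ys" using k by auto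
      then have "card {xs ! k, xs ! Suc k} \<le> card (set xs \<inter> set ys)" by (intro card_mono) auto
      then show False using meet PB adj_less[OF path_edge[OF p k]] by simp
    qed
  qed
  have "k < length xs \<Longrightarrow> phi N prox m g h (xs ! k) = phi N prox m g h (xs ! 0)" for k
    by (induction k) (use edge in auto)
  then show ?thesis using n n' by (auto simp: in_set_conv_nth)
qed

end

theorem mainTheorem11:
  fixes N :: nat and prox :: "nat \<Rightarrow> nat \<Rightarrow> bool" and m g h :: nat
  assumes "proximity_structure N prox"
    and "m < N" and "g < N" and "h < N"
  shows "(\<forall>n<N. phi N prox m g h n \<ge> 0 \<and>
            (phi N prox m g h n > 0 \<longleftrightarrow> n \<in> branch N prox m g))
       \<and> (\<forall>n n'. n \<in> path_between N prox m g \<and> n' \<in> path_between N prox m g \<and>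
            gdist N prox m n < gdist N prox m n' \<longrightarrow> phi N prox m g h n < phi N prox m g h n')
       \<and> (h \<in> path_between N prox m g \<longrightarrow>
            (\<forall>xs. is_path N prox xs \<and> card (set xs \<inter> path_between N prox m g) \<le> 1 \<longrightarrow>
               (\<forall>n\<in>set xs. \<forall>n'\<in>set xs. phi N prox m g h n = phi N prox m g h n')))"
proof -
  interpret phi_setting N prox m g h
    using assms by unfold_locales
  show ?thesis
    using phi_sign phi_strict_mono_on_path_between phi_constant_on_paths_off by blast
qed

end
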